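(* For every compactum $X$ and every $\mathcal A\in M_\cup(M_\cup X)$ (regarded as an element of $M(MX)$), the capacity $\mu^\bullet X(\mathcal A)$ is a possibility capacity, i.e. $\mu^\bullet X(M_\cup(M_\cup X))\subset M_\cup X$. Explicitly, for all closed $B,C\subset X$, $\mu^\bullet X(\mathcal A)(B\cup C)=\max\{\mu^\bullet X(\mathcal A)(B),\mu^\bullet X(\mathcal A)(C)\}$.
   Context: A compactum is a compact Hausdorff space; $I=[0,1]$; $\mathcal F(X)$ denotes the family of closed subsets of $X$. An (upper-semicontinuous) capacity on a compactum $X$ is a function $\nu:\mathcal F(X)\to I$ such that: (1) $\nu(X)=1$, $\nu(\emptyset)=0$; (2) if $F\subset G$ then $\nu(F)\le\nu(G)$; (3) if $\nu(F)<a$ then there is an open set $O\supset F$ with $\nu(B)<a$ for every closed $B\subset O$. For open $U\subset X$ one puts $\nu(U)=\sup\{\nu(K): K\text{ closed},\ K\subset U\}$. $MX$ is the set of all capacities on $X$, topologized by the subbase consisting of the sets $\{c\in MX: c(F)<a\}$ ($F$ closed, $a\in I$) and $\{c\in MX: c(U)>a\}$ ($U$ open, $a\in I$); it is a compactum. A capacity $\nu$ is a possibility capacity if $\nu(A\cup B)=\max\{\nu(A),\nu(B)\}$ for all closed $A,B$; $M_\cup X$ denotes the (closed) subspace of $MX$ of possibility capacities. A capacity $\mathcal A$ on the compactum $M_\cup X$ is regarded as a capacity on $MX$ via $\mathcal A(\Phi)=\mathcal A(\Phi\cap M_\cup X)$ for closed $\Phi\subset MX$; in this way $M_\cup(M_\cup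 X)\subset M(MX)$. For a closed $F\subset X$ and $t\in I$ put $F_t=\{c\in MX: c(F)\ge t\}$. The map $\mu^\bullet X: M(MX)\to MX$ is defined by $\mu^\bullet X(\mathcal C)(F)=\max\{\mathcal C(F_t)\cdot t: t\in(0,1]\}$ (the maximum exists). *)

theory Defs
  imports "HOL-Analysis.Analysis"
begin

text \<open>A capacity is a function on closed sets; to make the space of capacities a set of
  honest functions we require it to vanish on non-closed sets (extensionality).\<close>

definition capacity :: "'a topology \<Rightarrow> ('a set \<Rightarrow> real) \<Rightarrow> bool" where
  "capacity X \<nu> \<longleftrightarrow>
     (\<forall>F. closedin X F \<longrightarrow> \<nu> F \<in> {0..1}) \<and>
     (\<forall>F. \<not> closedin X F \<longrightarrow> \<nu> F = 0) \<and>
     \<nu> (topspace X) = 1 \<and> \<nu> {} = 0 \<and>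
     (\<forall>F G. closedin X F \<and> closedin X G \<and> F \<subseteq> G \<longrightarrow> \<nu> F \<le> \<nu> G) \<and>
     (\<forall>F a. closedin X F \<and> \<nu> F < a \<longrightarrow>
        (\<exists>W. openin X W \<and> F \<subseteq> W \<and> (\<forall>B. closedin X B \<and> B \<subseteq> W \<longrightarrow> \<nu> B < a)))"

definition caps :: "'a topology \<Rightarrow> ('a set \<Rightarrow> real) set" where
  "caps X = {\<nu>. capacity X \<nu>}"

definition cap_open :: "'a topology \<Rightarrow> ('a set \<Rightarrow> real) \<Rightarrow> 'a set \<Rightarrow> real" where
  "cap_open X c U = Sup (c ` {K. closedin X K \<and> K \<subseteq> U})"

text \<open>The whole space \<open>MX\<close> is added so that the topspace is exactly \<open>MX\<close>.\<close>
definition caps_top :: "'a topology \<Rightarrow> ('a set \<Rightarrow> real) topology" where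
  "caps_top X = topology_generated_by
     (insert (caps X)
       ({{c \<in> caps X. c F < a} | F a. closedin X F \<and> a \<in> {0..1}} \<union>
        {{c \<in> caps X. cap_open X c U > a} | U a. openin X U \<and> a \<in> {0..1}}))"

definition poss_capacity :: "'a topology \<Rightarrow> ('a set \<Rightarrow> real) \<Rightarrow> bool" where
  "poss_capacity X \<nu> \<longleftrightarrow> capacity X \<nu> \<and>
     (\<forall>A B. closedin X A \<and> closedin X B \<longrightarrow> \<nu> (A \<union> B) = max (\<nu> A) (\<nu> B))"

definition poss_caps :: "'a topology \<Rightarrow> ('a set \<Rightarrow> real) set" where
  "poss_caps X = {\<nu>. poss_capacity X \<nu>}"

definition poss_caps_top :: "'a topology \<Rightarrow> ('a set \<Rightarrow> real) topology" where
  "poss_caps_top X = subtopology (caps_top X) (poss_caps X)"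

text \<open>A capacity on \<open>M\<^sub>\<union>X\<close> regarded as a capacity on \<open>MX\<close>:
  \<open>\<A>(\<Phi>) = \<A>(\<Phi> \<inter> M\<^sub>\<union>X)\<close> for closed \<open>\<Phi> \<subseteq> MX\<close>.\<close>
definition lift_cap :: "'a topology \<Rightarrow> (('a set \<Rightarrow> real) set \<Rightarrow> real) \<Rightarrow> ('a set \<Rightarrow> real) set \<Rightarrow> real" where
  "lift_cap X \<A> \<Phi> = (if closedin (caps_top X) \<Phi> then \<A> (\<Phi> \<inter> poss_caps X) else 0)"

definition level_set :: "'a topology \<Rightarrow> 'a set \<Rightarrow> real \<Rightarrow> ('a set \<Rightarrow> real) set" where
  "level_set X F t = {c \<in> caps X. c F \<ge> t}"

text \<open>\<open>\<mu>\<^sup>\<bullet>X(\<C>)(F) = max{\<C>(F\<^sub>t)\<cdot>t : t \<in> (0,1]}\<close>; the maximum exists, so it equals the supremum.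
  On non-closed sets the value is 0 (extensionality convention).\<close>
definition mu_bullet :: "'a topology \<Rightarrow> (('a set \<Rightarrow> real) set \<Rightarrow> real) \<Rightarrow> 'a set \<Rightarrow> real" where
  "mu_bullet X \<C> F = (if closedin X F
     then Sup ((\<lambda>t. \<C> (level_set X F t) * t) ` {0<..1}) else 0)"

end

theory Submission
  imports Defs
begin

text \<open>Every \<open>c \<in> M\<^sub>\<union>X\<close> is maxitive, so \<open>c(B \<union> C) \<ge> t\<close> iff \<open>c(B) \<ge> t\<close> or \<open>c(C) \<ge> t\<close>: the level
  set \<open>(B \<union> C)\<^sub>t \<inter> M\<^sub>\<union>X\<close> is the union of \<open>B\<^sub>t \<inter> M\<^sub>\<union>X\<close> and \<open>C\<^sub>t \<inter> M\<^sub>\<union>X\<close>. Since \<open>\<A>\<close> is maxitive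
  as well, \<open>\<A>((B \<union> C)\<^sub>t) = max(\<A>(B\<^sub>t), \<A>(C\<^sub>t))\<close> for every \<open>t\<close>, and maxitivity passes to the
  supremum over \<open>t\<close> of \<open>\<A>(F\<^sub>t)\<cdot>t\<close>.

  What remains is that \<open>\<mu>\<^sup>\<bullet>X(\<A>)\<close> is a capacity at all, the only delicate axiom being upper
  semicontinuity. For a fixed level \<open>t\<close> it follows from that of \<open>\<A>\<close>, because \<open>M\<^sub>\<union>X\<close> is compact
  (a closed subset of \<open>MX\<close>, which is compact by Alexander's subbase theorem) and \<open>X\<close> is
  normal. Discretising \<open>t\<close> on a grid of mesh \<open>1/N\<close> reduces the supremum over \<open>t\<close> to finitely
  many levels, up to an error \<open>1/N\<close>.\<close>

lemma capacity_nonneg: "capacity X c \<Longrightarrow> 0 \<le> c F"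
  unfolding capacity_def by (cases "closedin X F") auto

lemma capacity_le_one: "capacity X c \<Longrightarrow> c F \<le> 1"
  unfolding capacity_def by (cases "closedin X F") auto

lemma capacity_topspace: "capacity X c \<Longrightarrow> c (topspace X) = 1"
  unfolding capacity_def by auto

lemma capacity_empty: "capacity X c \<Longrightarrow> c {} = 0"
  unfolding capacity_def by auto

lemma capacity_mono:
  "capacity X c \<Longrightarrow> closedin X F \<Longrightarrow> closedin X G \<Longrightarrow> F \<subseteq> G \<Longrightarrow> c F \<le> c G"
  unfolding capacity_def by auto

lemma capacity_usc:
  assumes "capacity X c" "closedin X F" "c F < a"
  obtains W where "openin X W" "F \<subseteq> W" "\<And>B. closedin X B \<Longrightarrow> B \<subseteq> W \<Longrightarrow> c B < a"
proof -
  have "\<exists>W. openin X W \<and> F \<subseteq> W \<and> (\<forall>B. closedin X B \<and> B \<subseteq> W \<longrightarrow> c B < a)"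
    using assms unfolding capacity_def by blast
  then show ?thesis
    using that by blast
qed

lemma capacity_closure_nbhd_less:
  assumes "normal_space X" "capacity X c" "closedin X F" "c F < a"
  obtains V where "openin X V" "F \<subseteq> V" "c (X closure_of V) < a"
proof -
  obtain U where "openin X U" "F \<subseteq> U" and U: "\<And>B. closedin X B \<Longrightarrow> B \<subseteq> U \<Longrightarrow> c B < a"
    using capacity_usc[OF assms(2-4)] by blast
  then obtain V where "openin X V" "F \<subseteq> V" "X closure_of V \<subseteq> U"
    using assms(1,3) unfolding normal_space_alt by meson
  then show ?thesis
    using that U[of "X closure_of V"] by (simp add: closedin_closure_of)
qed

lemma capacity_le_cap_open:
  assumes "capacity X c" "closedin X K" "K \<subseteq> U"
  shows "c K \<le> cap_open X c U"
  unfolding cap_open_def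
  by (rule cSup_upper) (use assms capacity_le_one in \<open>auto intro!: bdd_aboveI[where M=1]\<close>)

lemma poss_caps_subset_caps: "poss_caps X \<subseteq> caps X"
  unfolding poss_caps_def caps_def poss_capacity_def by auto

lemma cap_open_Un_le_max_closure:
  assumes "poss_capacity X c" "openin X U" "openin X V"
  shows "cap_open X c (U \<union> V) \<le> max (c (X closure_of U)) (c (X closure_of V))"
  unfolding cap_open_def
proof (rule cSup_least)
  show "c ` {K. closedin X K \<and> K \<subseteq> U \<union> V} \<noteq> {}"
    by blast
  have cap: "capacity X c"
    using assms(1) unfolding poss_capacity_def by blast
  fix y
  assume "y \<in> c ` {K. closedin X K \<and> K \<subseteq> U \<union> V}"
  then obtain K where K: "closedin X K" "K \<subseteq> U \<union> V" "y = c K"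
    by blast
  have "U \<subseteq> X closure_of U" "V \<subseteq> X closure_of V"
    using assms(2,3) by (simp_all add: closure_of_subset openin_subset)
  then have "K \<subseteq> X closure_of U \<union> X closure_of V"
    using K(2) by blast
  then have "c K \<le> c (X closure_of U \<union> X closure_of V)"
    by (intro capacity_mono[OF cap K(1)]) auto
  also have "\<dots> = max (c (X closure_of U)) (c (X closure_of V))"
    using assms(1) unfolding poss_capacity_def by simp
  finally show "y \<le> max (c (X closure_of U)) (c (X closure_of V))"
    using K(3) by simp
qed

lemma topspace_caps_top [simp]: "topspace (caps_top X) = caps X"
  unfolding caps_top_def by (subst topology_generated_by_topspace) auto

lemma openin_caps_top_less:
  assumes "closedin X F" "a \<in> {0..1}"
  shows "openin (caps_top X) {c \<in> caps X. c F < a}"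
  unfolding caps_top_def by (rule topology_generated_by_Basis) (use assms in blast)

lemma openin_caps_top_greater:
  assumes "openin X U" "a \<in> {0..1}"
  shows "openin (caps_top X) {c \<in> caps X. cap_open X c U > a}"
  unfolding caps_top_def by (rule topology_generated_by_Basis) (use assms in blast)

lemma closedin_level_set:
  assumes "closedin X F" "t \<in> {0..1}"
  shows "closedin (caps_top X) (level_set X F t)"
proof -
  have "level_set X F t = topspace (caps_top X) - {c \<in> caps X. c F < t}"
    unfolding level_set_def by auto
  then show ?thesis
    using closedin_diff[OF closedin_topspace openin_caps_top_less[OF assms]] by simp
qed

lemma topology_generated_by_eq_subbase:
  assumes "\<Union>\<S> \<in> \<S>"
  shows "topology_generated_by \<S> =
    topology (arbitrary union_of (finite intersection_of (\<lambda>S. S \<in> \<S>) relative_to \<Union>\<S>))"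
proof -
  have "finite intersection_of (\<lambda>S. S \<in> \<S>) relative_to \<Union>\<S> =
      finite' intersection_of (\<lambda>S. S \<in> \<S>)"
  proof (intro ext iffI)
    fix T
    assume "(finite intersection_of (\<lambda>S. S \<in> \<S>) relative_to \<Union>\<S>) T"
    then obtain \<F> where "finite \<F>" "\<F> \<subseteq> \<S>" "T = \<Inter>\<F> \<inter> \<Union>\<S>"
      unfolding relative_to_def intersection_of_def by auto
    then show "(finite' intersection_of (\<lambda>S. S \<in> \<S>)) T"
      unfolding intersection_of_def using assms
      by (intro exI[of _ "insert (\<Union>\<S>) \<F>"]) auto
  next
    fix T
    assume "(finite' intersection_of (\<lambda>S. S \<in> \<S>)) T"
    then obtain \<F> where "finite \<F>" "\<F> \<noteq> {}" "\<F> \<subseteq> \<S>" "T = \<Inter>\<F>"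
      unfolding intersection_of_def by auto
    then show "(finite intersection_of (\<lambda>S. S \<in> \<S>) relative_to \<Union>\<S>) T"
      unfolding relative_to_def intersection_of_def by (intro exI[of _ T]) auto
  qed
  then show ?thesis
    by (simp add: generate_topology_on_eq)
qed

definition caps_subbase :: "'a topology \<Rightarrow> ('a set \<Rightarrow> real) set set" where
  "caps_subbase X = insert (caps X)
     ({{c \<in> caps X. c F < a} | F a. closedin X F \<and> a \<in> {0..1}} \<union>
      {{c \<in> caps X. cap_open X c U > a} | U a. openin X U \<and> a \<in> {0..1}})"

lemma caps_top_eq_subbase:
  "caps_top X =
    topology (arbitrary union_of (finite intersection_of (\<lambda>S. S \<in> caps_subbase X) relative_to caps X))"
proof -
  have "\<Union>(caps_subbase X) = caps X"
    unfolding caps_subbase_def by auto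
  then show ?thesis
    using topology_generated_by_eq_subbase[of "caps_subbase X"]
    by (simp add: caps_top_def caps_subbase_def)
qed

lemma capacity_outer_envelope:
  assumes nonneg: "\<And>V. openin X V \<Longrightarrow> 0 \<le> e V" and "e (topspace X) = 1" "e {} = 0"
  defines "c \<equiv> \<lambda>F. if closedin X F then INF V \<in> {V. openin X V \<and> F \<subseteq> V}. e V else 0"
  shows "capacity X c"
    and "closedin X F \<Longrightarrow> openin X V \<Longrightarrow> F \<subseteq> V \<Longrightarrow> c F \<le> e V"
    and "closedin X F \<Longrightarrow> (\<And>V. openin X V \<Longrightarrow> F \<subseteq> V \<Longrightarrow> b \<le> e V) \<Longrightarrow> b \<le> c F"
    and "openin X U \<Longrightarrow> cap_open X c U \<le> e U"
proof -
  have bdd: "bdd_below (e ` {V. openin X V \<and> F \<subseteq> V})" for F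
    using nonneg by (intro bdd_belowI[where m=0]) auto
  have below: "c F \<le> e V" if "closedin X F" "openin X V" "F \<subseteq> V" for F V
    using that unfolding c_def by (auto intro: cINF_lower[OF bdd])
  have above: "b \<le> c F" if "closedin X F" "\<And>V. openin X V \<Longrightarrow> F \<subseteq> V \<Longrightarrow> b \<le> e V" for F b
    using that closedin_subset[OF that(1)] unfolding c_def by (auto intro!: cINF_greatest)
  show "capacity X c"
    unfolding capacity_def
  proof (intro conjI allI impI)
    fix F
    assume F: "closedin X F"
    show "c F \<in> {0..1}"
      using above[OF F nonneg] below[OF F _ closedin_subset[OF F]] assms(2) by auto
  next
    have "e V = 1" if "openin X V" "topspace X \<subseteq> V" for V
      using that openin_subset assms(2) by (metis subset_antisym)
    then have "1 \<le> c (topspace X)"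
      by (intro above) simp_all
    moreover have "c (topspace X) \<le> 1"
      using below[of "topspace X" "topspace X"] assms(2) by simp
    ultimately show "c (topspace X) = 1"
      by simp
    have "c {} \<le> 0"
      using below[of "{}" "{}"] assms(3) by simp
    moreover have "0 \<le> c {}"
      using nonneg by (intro above) auto
    ultimately show "c {} = 0"
      by simp
  next
    fix F G
    assume "closedin X F \<and> closedin X G \<and> F \<subseteq> G"
    then show "c F \<le> c G"
      by (intro above) (auto intro: below)
  next
    fix F a
    assume Fa: "closedin X F \<and> c F < a"
    then have "Inf (e ` {V. openin X V \<and> F \<subseteq> V}) < a"
      by (simp add: c_def split: if_splits)
    moreover have "{V. openin X V \<and> F \<subseteq> V} \<noteq> {}"
      using Fa closedin_subset by blast
    ultimately obtain V where "openin X V" "F \<subseteq> V" "e V < a"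
      by (auto simp: cInf_less_iff[OF _ bdd])
    then show "\<exists>W. openin X W \<and> F \<subseteq> W \<and> (\<forall>B. closedin X B \<and> B \<subseteq> W \<longrightarrow> c B < a)"
      using below by (meson le_less_trans)
  qed (simp add: c_def)
  show "closedin X F \<Longrightarrow> openin X V \<Longrightarrow> F \<subseteq> V \<Longrightarrow> c F \<le> e V"
    by (rule below)
  show "closedin X F \<Longrightarrow> (\<And>V. openin X V \<Longrightarrow> F \<subseteq> V \<Longrightarrow> b \<le> e V) \<Longrightarrow> b \<le> c F"
    by (rule above)
  show "openin X U \<Longrightarrow> cap_open X c U \<le> e U"
    unfolding cap_open_def by (rule cSup_least) (auto intro: below)
qed

lemma caps_empty: "topspace X = {} \<Longrightarrow> caps X = {}"
  unfolding caps_def capacity_def by auto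

text \<open>If \<open>{c. c(F) < a}\<close> belongs to \<open>\<C>\<close> for some closed \<open>F \<subseteq> V\<close>, every capacity outside
  \<open>\<Union>\<C>\<close> has weight at least \<open>a\<close> on \<open>V\<close>; the forced weight of \<open>V\<close> is the supremum of such \<open>a\<close>
  (and \<open>1\<close> for \<open>V = X\<close>).\<close>

definition forced_weight :: "('a set \<Rightarrow> real) set set \<Rightarrow> 'a topology \<Rightarrow> 'a set \<Rightarrow> real" where
  "forced_weight \<C> X V = (if V = topspace X then 1 else
     Sup (insert 0 {a \<in> {0..1}. \<exists>F. closedin X F \<and> F \<subseteq> V \<and> {c \<in> caps X. c F < a} \<in> \<C>}))"

lemma bdd_above_forced_weights:
  "bdd_above (insert 0 {a \<in> {0..1}. \<exists>F. closedin X F \<and> F \<subseteq> V \<and> {c \<in> caps X. c F < a} \<in> \<C>})"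
  by (rule bdd_aboveI[of _ 1]) auto

lemma forced_weight_nonneg: "0 \<le> forced_weight \<C> X V"
  using cSup_upper[OF _ bdd_above_forced_weights] by (auto simp: forced_weight_def)

lemma forced_weight_ge:
  assumes "closedin X F" "F \<subseteq> V" "a \<in> {0..1}" "{c \<in> caps X. c F < a} \<in> \<C>"
  shows "a \<le> forced_weight \<C> X V"
proof (cases "V = topspace X")
  case False
  have "a \<in> insert 0 {a \<in> {0..1}. \<exists>F. closedin X F \<and> F \<subseteq> V \<and> {c \<in> caps X. c F < a} \<in> \<C>}"
    using assms by blast
  then have "a \<le> Sup (insert 0 {a \<in> {0..1}. \<exists>F. closedin X F \<and> F \<subseteq> V \<and> {c \<in> caps X. c F < a} \<in> \<C>})"
    by (rule cSup_upper[OF _ bdd_above_forced_weights])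
  with False show ?thesis
    by (simp add: forced_weight_def)
qed (use assms(3) in \<open>simp add: forced_weight_def\<close>)

lemma forced_weight_le:
  assumes "0 \<le> b" "V = topspace X \<Longrightarrow> 1 \<le> b"
    and "\<And>F a. closedin X F \<Longrightarrow> F \<subseteq> V \<Longrightarrow> a \<in> {0..1} \<Longrightarrow> {c \<in> caps X. c F < a} \<in> \<C> \<Longrightarrow> a \<le> b"
  shows "forced_weight \<C> X V \<le> b"
  using assms by (auto simp: forced_weight_def intro!: cSup_least)

lemma forced_weight_empty:
  assumes "topspace X \<noteq> {}" and "\<And>S. S \<in> \<C> \<Longrightarrow> \<exists>c\<in>caps X. c \<notin> S"
  shows "forced_weight \<C> X {} = 0"
proof (rule antisym[OF forced_weight_le forced_weight_nonneg])
  fix F a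
  assume "F \<subseteq> {}" and S: "{c \<in> caps X. c F < a} \<in> \<C>"
  obtain c where "c \<in> caps X" "\<not> c F < a"
    using assms(2)[OF S] by blast
  then show "a \<le> 0"
    using \<open>F \<subseteq> {}\<close> by (simp add: caps_def capacity_empty)
qed (use assms(1) in auto)

text \<open>The uncovered capacity is the outer envelope of the forced weight.\<close>

lemma caps_subbase_uncovered:
  assumes \<C>: "\<C> \<subseteq> caps_subbase X" and "topspace X \<noteq> {}"
    and escape: "\<And>S T. S \<in> \<C> \<Longrightarrow> T \<in> \<C> \<Longrightarrow> \<exists>c\<in>caps X. c \<notin> S \<and> c \<notin> T"
  shows "\<exists>c\<in>caps X. c \<notin> \<Union>\<C>"
proof -
  have empty: "forced_weight \<C> X {} = 0"
    using escape by (intro forced_weight_empty[OF assms(2)]) blast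
  have topspace: "forced_weight \<C> X (topspace X) = 1"
    by (simp add: forced_weight_def)
  define c0 where "c0 F = (if closedin X F then INF V \<in> {V. openin X V \<and> F \<subseteq> V}. forced_weight \<C> X V else 0)"
    for F
  note envelope = capacity_outer_envelope[OF forced_weight_nonneg topspace empty, folded c0_def]
  have "c0 \<in> caps X"
    using envelope(1) by (simp add: caps_def)
  moreover have "c0 \<notin> S" if S: "S \<in> \<C>" for S
  proof -
    obtain c where c: "c \<in> caps X" "c \<notin> S"
      using escape[OF S S] by blast
    have "S \<in> caps_subbase X"
      using S \<C> by blast
    then consider "S = caps X"
      | F a where "S = {c \<in> caps X. c F < a}" "closedin X F" "a \<in> {0..1}"
      | U b where "S = {c \<in> caps X. cap_open X c U > b}" "openin X U" "b \<in> {0..1}"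
      unfolding caps_subbase_def by blast
    then show ?thesis
    proof cases
      case 1
      then show ?thesis
        using c by blast
    next
      case (2 F a)
      then have "a \<le> c0 F"
        using S by (intro envelope(3) forced_weight_ge) auto
      then show ?thesis
        using 2 by simp
    next
      case (3 U b)
      have "forced_weight \<C> X U \<le> b"
      proof (rule forced_weight_le)
        fix F a
        assume F: "closedin X F" "F \<subseteq> U" and T: "{c \<in> caps X. c F < a} \<in> \<C>"
        then obtain c where "c \<in> caps X" "\<not> c F < a" "c \<notin> S"
          using escape[OF T S] by blast
        then show "a \<le> b"
          using capacity_le_cap_open[of X c F U] F 3 by (auto simp: caps_def)
      next
        assume "U = topspace X"
        then show "1 \<le> b"
          using capacity_le_cap_open[of X c "topspace X" U] c 3
          by (auto simp: caps_def capacity_topspace)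
      qed (use 3 in simp)
      then show ?thesis
        using envelope(4)[OF 3(2)] 3(1) by auto
    qed
  qed
  ultimately show ?thesis
    by blast
qed

lemma compact_space_caps_top: "compact_space (caps_top X)"
proof (rule Alexander_subbase_alt[OF _ _ caps_top_eq_subbase[symmetric]])
  show "caps X \<subseteq> \<Union>(caps_subbase X)"
    unfolding caps_subbase_def by blast
  fix \<C>
  assume \<C>: "\<C> \<subseteq> caps_subbase X" "caps X \<subseteq> \<Union>\<C>"
  show "\<exists>\<C>'. finite \<C>' \<and> \<C>' \<subseteq> \<C> \<and> caps X \<subseteq> \<Union>\<C>'"
  proof (rule ccontr)
    assume "\<not> ?thesis"
    then have no_finite: "\<not> caps X \<subseteq> \<Union>\<C>'" if "finite \<C>'" "\<C>' \<subseteq> \<C>" for \<C>'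
      using that by blast
    have "topspace X \<noteq> {}"
      using no_finite[of "{}"] caps_empty by auto
    moreover have "\<exists>c\<in>caps X. c \<notin> S \<and> c \<notin> T" if "S \<in> \<C>" "T \<in> \<C>" for S T
      using no_finite[of "{S, T}"] that by auto
    ultimately show False
      using caps_subbase_uncovered[OF \<C>(1)] \<C>(2) by blast
  qed
qed

lemma closedin_poss_caps:
  assumes "normal_space X"
  shows "closedin (caps_top X) (poss_caps X)"
proof -
  have "\<exists>N. openin (caps_top X) N \<and> c \<in> N \<and> N \<subseteq> caps X - poss_caps X"
    if c: "c \<in> caps X - poss_caps X" for c
  proof -
    have cap: "capacity X c"
      using c by (simp add: caps_def)
    then obtain A B where AB: "closedin X A" "closedin X B" "c (A \<union> B) \<noteq> max (c A) (c B)"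
      using c unfolding poss_caps_def poss_capacity_def by auto
    then have "c A \<le> c (A \<union> B)" "c B \<le> c (A \<union> B)"
      by (auto intro: capacity_mono[OF cap])
    then have "max (c A) (c B) < c (A \<union> B)"
      using AB(3) by linarith
    then obtain r where r: "max (c A) (c B) < r" "r < c (A \<union> B)"
      using dense by blast
    have r01: "r \<in> {0..1}"
      using r capacity_nonneg[OF cap, of A] capacity_le_one[OF cap, of "A \<union> B"] by auto
    obtain U where U: "openin X U" "A \<subseteq> U" "c (X closure_of U) < r"
      using capacity_closure_nbhd_less[OF assms cap AB(1)] r(1) by auto
    obtain V where V: "openin X V" "B \<subseteq> V" "c (X closure_of V) < r"
      using capacity_closure_nbhd_less[OF assms cap AB(2)] r(1) by auto
    define N where "N = {c' \<in> caps X. cap_open X c' (U \<union> V) > r} \<inter>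
      {c' \<in> caps X. c' (X closure_of U) < r} \<inter> {c' \<in> caps X. c' (X closure_of V) < r}"
    have "openin (caps_top X) N"
      unfolding N_def using U V r01
      by (intro openin_Int openin_caps_top_less openin_caps_top_greater) auto
    moreover have "c (A \<union> B) \<le> cap_open X c (U \<union> V)"
      using AB U V by (intro capacity_le_cap_open[OF cap]) auto
    then have "c \<in> N"
      using c r U V unfolding N_def by auto
    moreover have "c' \<notin> poss_caps X" if "c' \<in> N" for c'
    proof
      assume "c' \<in> poss_caps X"
      then have "cap_open X c' (U \<union> V) \<le> max (c' (X closure_of U)) (c' (X closure_of V))"
        using cap_open_Un_le_max_closure[OF _ U(1) V(1)] by (simp add: poss_caps_def)
      moreover have "max (c' (X closure_of U)) (c' (X closure_of V)) < r" "r < cap_open X c' (U \<union> V)"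
        using that by (simp_all add: N_def)
      ultimately show False
        by linarith
    qed
    ultimately show ?thesis
      unfolding N_def by blast
  qed
  then have "openin (caps_top X) (topspace (caps_top X) - poss_caps X)"
    by (subst openin_subopen) simp
  then show ?thesis
    using poss_caps_subset_caps by (simp add: closedin_def)
qed

lemma topspace_poss_caps_top [simp]: "topspace (poss_caps_top X) = poss_caps X"
  using poss_caps_subset_caps by (auto simp: poss_caps_top_def)

lemma compact_space_poss_caps_top:
  "normal_space X \<Longrightarrow> compact_space (poss_caps_top X)"
  unfolding poss_caps_top_def
  by (rule compact_space_subtopology[OF closedin_compact_space[OF compact_space_caps_top closedin_poss_caps]])

lemma closedin_level_set_poss_caps:
  assumes "closedin X F" "t \<in> {0..1}"
  shows "closedin (poss_caps_top X) (level_set X F t \<inter> poss_caps X)"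
  unfolding poss_caps_top_def closedin_subtopology
  using closedin_level_set[OF assms] by blast

lemma level_set_separation:
  assumes "normal_space X" "closedin X F" "t \<in> {0..1}"
    and \<Phi>: "compactin (caps_top X) \<Phi>" "\<Phi> \<inter> level_set X F t = {}"
  obtains W where "openin X W" "F \<subseteq> W"
    "\<And>B. closedin X B \<Longrightarrow> B \<subseteq> W \<Longrightarrow> level_set X B t \<inter> \<Phi> = {}"
proof -
  have \<Phi>_caps: "\<Phi> \<subseteq> caps X"
    using compactin_subset_topspace[OF \<Phi>(1)] by simp
  have "\<exists>V. openin X V \<and> F \<subseteq> V \<and> c (X closure_of V) < t" if "c \<in> \<Phi>" for c
  proof -
    have "capacity X c" "c F < t"
      using that \<Phi> \<Phi>_caps by (auto simp: caps_def level_set_def)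
    then show ?thesis
      using capacity_closure_nbhd_less[OF assms(1) _ assms(2)] by metis
  qed
  then obtain V where V: "\<And>c. c \<in> \<Phi> \<Longrightarrow> openin X (V c) \<and> F \<subseteq> V c \<and> c (X closure_of V c) < t"
    by metis
  define Q where "Q c = {c' \<in> caps X. c' (X closure_of V c) < t}" for c
  have "openin (caps_top X) (Q c)" if "c \<in> \<Phi>" for c
    unfolding Q_def using assms(3) by (intro openin_caps_top_less) auto
  moreover have "\<Phi> \<subseteq> (\<Union>c\<in>\<Phi>. Q c)"
    using V \<Phi>_caps unfolding Q_def by auto
  ultimately obtain D where D: "finite D" "D \<subseteq> \<Phi>" "\<Phi> \<subseteq> (\<Union>c\<in>D. Q c)"
    using \<Phi>(1) unfolding compactin_def by (metis (no_types, lifting) finite_subset_image imageE)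
  define W where "W = topspace X \<inter> (\<Inter>c\<in>D. V c)"
  show ?thesis
  proof
    show "openin X W"
      unfolding W_def using D V by (intro openin_Int_Inter) auto
    show "F \<subseteq> W"
      unfolding W_def using D V closedin_subset[OF assms(2)] by blast
    fix B
    assume B: "closedin X B" "B \<subseteq> W"
    have "c' B < t" if c': "c' \<in> \<Phi>" for c'
    proof -
      obtain c where c: "c \<in> D" "c' \<in> Q c"
        using D(3) c' by blast
      have "B \<subseteq> V c"
        using B(2) c(1) unfolding W_def by blast
      also have "\<dots> \<subseteq> X closure_of V c"
        using V c(1) D(2) by (meson closure_of_subset openin_subset subsetD)
      finally have "B \<subseteq> X closure_of V c" .
      then have "c' B \<le> c' (X closure_of V c)"
        using c' \<Phi>_caps B(1) by (intro capacity_mono) (auto simp: caps_def)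
      then show ?thesis
        using c(2) unfolding Q_def by simp
    qed
    then show "level_set X B t \<inter> \<Phi> = {}"
      unfolding level_set_def by (auto simp: not_le[symmetric])
  qed
qed

lemma grid_interval:
  assumes "0 < t" "t \<le> 1" "0 < N"
  obtains k :: nat where "k < N" "real k / real N < t" "t \<le> (real k + 1) / real N"
proof -
  define m where "m = nat \<lceil>t * real N\<rceil>"
  have "0 < t * real N"
    using assms by simp
  then have m: "1 \<le> m" "t * real N \<le> real m" "real m < t * real N + 1"
    unfolding m_def by linarith+
  have "t * real N \<le> real N"
    using assms by (simp add: mult_left_le_one_le)
  then have "m \<le> N"
    unfolding m_def by (simp add: ceiling_le_iff nat_le_iff)
  then show ?thesis
    using m assms by (intro that[of "m - 1"]) (auto simp: of_nat_diff divide_less_eq le_divide_eq)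
qed

lemma antitone_weighted_le_grid:
  fixes h :: "real \<Rightarrow> real"
  assumes antitone: "\<And>s t. 0 < s \<Longrightarrow> s \<le> t \<Longrightarrow> t \<le> 1 \<Longrightarrow> h t \<le> h s"
    and bounds: "\<And>t. 0 < t \<Longrightarrow> t \<le> 1 \<Longrightarrow> 0 \<le> h t \<and> h t \<le> 1"
    and "0 < N" "1 / real N \<le> b"
    and grid: "\<And>k. 1 \<le> k \<Longrightarrow> k < N \<Longrightarrow> h (real k / real N) * ((real k + 1) / real N) \<le> b"
    and t: "0 < t" "t \<le> 1"
  shows "h t * t \<le> b"
proof -
  obtain k where k: "k < N" "real k / real N < t" "t \<le> (real k + 1) / real N"
    using grid_interval[OF t \<open>0 < N\<close>] .
  show ?thesis
  proof (cases "k = 0")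
    case True
    have "h t * t \<le> 1 * t"
      using bounds[OF t] t by (intro mult_right_mono) auto
    then show ?thesis
      using k(3) True \<open>1 / real N \<le> b\<close> by simp
  next
    case False
    have "0 < real k / real N"
      using False \<open>0 < N\<close> by simp
    then have "h t * t \<le> h (real k / real N) * ((real k + 1) / real N)"
      using antitone[of "real k / real N" t] bounds[OF t] k t by (intro mult_mono) auto
    also have "\<dots> \<le> b"
      using False k(1) by (intro grid) auto
    finally show ?thesis .
  qed
qed

locale maxitive_capacity_on_poss_caps =
  fixes X :: "'a topology" and \<A> :: "('a set \<Rightarrow> real) set \<Rightarrow> real"
  assumes normal: "normal_space X" and poss_caps_A: "\<A> \<in> poss_caps (poss_caps_top X)"
begin

lemma capacity_A: "capacity (poss_caps_top X) \<A>"
  using poss_caps_A by (simp add: poss_caps_def poss_capacity_def)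

lemma A_Un:
  "closedin (poss_caps_top X) S \<Longrightarrow> closedin (poss_caps_top X) T \<Longrightarrow> \<A> (S \<union> T) = max (\<A> S) (\<A> T)"
  using poss_caps_A by (simp add: poss_caps_def poss_capacity_def)

definition level_weight :: "'a set \<Rightarrow> real \<Rightarrow> real" where
  "level_weight F t = \<A> (level_set X F t \<inter> poss_caps X)"

lemma level_weight_nonneg: "0 \<le> level_weight F t"
  unfolding level_weight_def by (rule capacity_nonneg[OF capacity_A])

lemma level_weight_le_one: "level_weight F t \<le> 1"
  unfolding level_weight_def by (rule capacity_le_one[OF capacity_A])

lemma level_weight_antimono:
  assumes "closedin X F" "0 \<le> s" "s \<le> t" "t \<le> 1"
  shows "level_weight F t \<le> level_weight F s"
  unfolding level_weight_def using assms
  by (intro capacity_mono[OF capacity_A] closedin_level_set_poss_caps) (auto simp: level_set_def)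

lemma level_weight_mono:
  assumes "closedin X F" "closedin X G" "F \<subseteq> G" "t \<in> {0..1}"
  shows "level_weight F t \<le> level_weight G t"
proof -
  have "c F \<le> c G" if "c \<in> caps X" for c
    using that assms by (intro capacity_mono) (auto simp: caps_def)
  then have "level_set X F t \<subseteq> level_set X G t"
    unfolding level_set_def by force
  then show ?thesis
    unfolding level_weight_def using assms
    by (intro capacity_mono[OF capacity_A] closedin_level_set_poss_caps) auto
qed

lemma level_weight_topspace: "t \<in> {0<..1} \<Longrightarrow> level_weight (topspace X) t = 1"
proof -
  assume "t \<in> {0<..1}"
  moreover have "c \<in> caps X" "t \<le> c (topspace X)" if "c \<in> poss_caps X" for c
    using subsetD[OF poss_caps_subset_caps that] calculation by (auto simp: caps_def capacity_topspace)
  ultimately have "level_set X (topspace X) t \<inter> poss_caps X = topspace (poss_caps_top X)"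
    unfolding level_set_def by auto
  then show ?thesis
    unfolding level_weight_def using capacity_topspace[OF capacity_A] by simp
qed

lemma level_weight_empty: "t \<in> {0<..1} \<Longrightarrow> level_weight {} t = 0"
proof -
  assume "t \<in> {0<..1}"
  then have "level_set X {} t = {}"
    by (auto simp: level_set_def caps_def capacity_empty)
  then show ?thesis
    unfolding level_weight_def by (simp add: capacity_empty[OF capacity_A])
qed

lemma level_weight_Un:
  assumes "closedin X B" "closedin X C" "t \<in> {0..1}"
  shows "level_weight (B \<union> C) t = max (level_weight B t) (level_weight C t)"
proof -
  have "t \<le> c (B \<union> C) \<longleftrightarrow> t \<le> c B \<or> t \<le> c C" if "c \<in> poss_caps X" for c
    using that assms by (simp add: poss_caps_def poss_capacity_def le_max_iff_disj)
  then have "level_set X (B \<union> C) t \<inter> poss_caps X =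
      (level_set X B t \<inter> poss_caps X) \<union> (level_set X C t \<inter> poss_caps X)"
    unfolding level_set_def by blast
  then show ?thesis
    unfolding level_weight_def using assms by (simp add: A_Un closedin_level_set_poss_caps)
qed

text \<open>Upper semicontinuity of \<open>\<A>\<close> gives an open neighbourhood \<open>U\<close> of \<open>F\<^sub>t\<close> in \<open>M\<^sub>\<union>X\<close>;
  its complement in the compactum \<open>M\<^sub>\<union>X\<close> is compact, so \<open>B\<^sub>t \<subseteq> U\<close> for \<open>B\<close> near \<open>F\<close>.\<close>

lemma level_weight_usc:
  assumes F: "closedin X F" and t: "t \<in> {0..1}" and "level_weight F t < a"
  obtains W where "openin X W" "F \<subseteq> W" "\<And>B. closedin X B \<Longrightarrow> B \<subseteq> W \<Longrightarrow> level_weight B t < a"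
proof -
  obtain U where U: "openin (poss_caps_top X) U" "level_set X F t \<inter> poss_caps X \<subseteq> U"
    and A_U: "\<And>K. closedin (poss_caps_top X) K \<Longrightarrow> K \<subseteq> U \<Longrightarrow> \<A> K < a"
    using capacity_usc[OF capacity_A closedin_level_set_poss_caps[OF F t]] assms(3)
    unfolding level_weight_def by blast
  have "closedin (poss_caps_top X) (poss_caps X - U)"
    using closedin_diff[OF closedin_topspace U(1)] by simp
  then have "compactin (poss_caps_top X) (poss_caps X - U)"
    by (rule closedin_compact_space[OF compact_space_poss_caps_top[OF normal]])
  then have "compactin (caps_top X) (poss_caps X - U)"
    by (simp add: poss_caps_top_def compactin_subtopology)
  moreover have "(poss_caps X - U) \<inter> level_set X F t = {}"
    using U(2) by blast
  ultimately obtain W where W: "openin X W" "F \<subseteq> W"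
    and avoid: "\<And>B. closedin X B \<Longrightarrow> B \<subseteq> W \<Longrightarrow> level_set X B t \<inter> (poss_caps X - U) = {}"
    using level_set_separation[OF normal F t] by blast
  show ?thesis
  proof (rule that[OF W])
    fix B
    assume B: "closedin X B" "B \<subseteq> W"
    then have "level_set X B t \<inter> poss_caps X \<subseteq> U"
      using avoid by blast
    then show "level_weight B t < a"
      unfolding level_weight_def using B t by (intro A_U closedin_level_set_poss_caps)
  qed
qed

definition level_sup :: "'a set \<Rightarrow> real" where
  "level_sup F = (SUP t \<in> {0<..1}. level_weight F t * t)"

lemma level_sup_upper: "t \<in> {0<..1} \<Longrightarrow> level_weight F t * t \<le> level_sup F"
  unfolding level_sup_def
  by (rule cSUP_upper) (auto intro!: bdd_aboveI[of _ 1] mult_le_one level_weight_nonneg level_weight_le_one)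

lemma level_sup_least: "(\<And>t. t \<in> {0<..1} \<Longrightarrow> level_weight F t * t \<le> b) \<Longrightarrow> level_sup F \<le> b"
  unfolding level_sup_def by (rule cSUP_least) auto

lemma level_sup_nonneg: "0 \<le> level_sup F"
  using level_sup_upper[of 1 F] level_weight_nonneg[of F 1] by simp

lemma level_sup_le_one: "level_sup F \<le> 1"
  by (rule level_sup_least) (auto intro!: mult_le_one level_weight_nonneg level_weight_le_one)

lemma mu_bullet_lift_cap_eq:
  "mu_bullet X (lift_cap X \<A>) F = (if closedin X F then level_sup F else 0)"
proof (cases "closedin X F")
  case True
  then have "lift_cap X \<A> (level_set X F t) = level_weight F t" if "t \<in> {0<..1}" for t
    using closedin_level_set[OF True, of t] that by (simp add: lift_cap_def level_weight_def)
  then show ?thesis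
    using True by (simp add: mu_bullet_def level_sup_def)
qed (simp add: mu_bullet_def)

lemma level_sup_Un:
  assumes "closedin X B" "closedin X C"
  shows "level_sup (B \<union> C) = max (level_sup B) (level_sup C)"
proof (rule antisym)
  show "level_sup (B \<union> C) \<le> max (level_sup B) (level_sup C)"
  proof (rule level_sup_least)
    fix t :: real
    assume t: "t \<in> {0<..1}"
    have "level_weight (B \<union> C) t * t = max (level_weight B t * t) (level_weight C t * t)"
      using level_weight_Un[OF assms, of t] t by (simp add: max_mult_distrib_right)
    then show "level_weight (B \<union> C) t * t \<le> max (level_sup B) (level_sup C)"
      using level_sup_upper[OF t, of B] level_sup_upper[OF t, of C] by linarith
  qed
  have "level_sup F \<le> level_sup (B \<union> C)" if "F = B \<or> F = C" for F
  proof (rule level_sup_least)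
    fix t :: real
    assume t: "t \<in> {0<..1}"
    then have "level_weight F t * t \<le> level_weight (B \<union> C) t * t"
      using that assms by (intro mult_right_mono level_weight_mono) auto
    then show "level_weight F t * t \<le> level_sup (B \<union> C)"
      using level_sup_upper[OF t] by (rule order_trans)
  qed
  then show "max (level_sup B) (level_sup C) \<le> level_sup (B \<union> C)"
    by simp
qed

lemma level_weight_grid_usc:
  assumes F: "closedin X F" and "1 / real N < b - level_sup F" and k: "1 \<le> k" "k < N"
  shows "\<exists>W. openin X W \<and> F \<subseteq> W \<and>
    (\<forall>B. closedin X B \<and> B \<subseteq> W \<longrightarrow> level_weight B (real k / real N) * ((real k + 1) / real N) < b)"
proof -
  define q where "q = (real k + 1) / real N"
  have tk: "real k / real N \<in> {0..1}" and q: "0 < q"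
    using k by (auto simp: q_def)
  have "level_weight F (real k / real N) * q =
      level_weight F (real k / real N) * (real k / real N) + level_weight F (real k / real N) / real N"
    by (simp add: q_def add_divide_distrib distrib_left)
  also have "\<dots> \<le> level_sup F + 1 / real N"
    using level_sup_upper[of "real k / real N" F] k level_weight_le_one[of F]
    by (intro add_mono divide_right_mono) auto
  also have "\<dots> < b"
    using assms(2) by simp
  finally have "level_weight F (real k / real N) < b / q"
    using q by (simp add: pos_less_divide_eq)
  then obtain W where "openin X W" "F \<subseteq> W"
    and "\<And>B. closedin X B \<Longrightarrow> B \<subseteq> W \<Longrightarrow> level_weight B (real k / real N) < b / q"
    using level_weight_usc[OF F tk] by blast
  then have "\<And>B. closedin X B \<Longrightarrow> B \<subseteq> W \<Longrightarrow> level_weight B (real k / real N) * q < b"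
    using pos_less_divide_eq[OF q] by blast
  then show ?thesis
    using \<open>openin X W\<close> \<open>F \<subseteq> W\<close> unfolding q_def by blast
qed

text \<open>The grid bounds at the finitely many levels \<open>k/N\<close> persist on a common neighbourhood
  of \<open>F\<close>, and control \<open>level_weight B t \<cdot> t\<close> at all levels \<open>t\<close> up to \<open>1/N\<close>.\<close>

lemma level_sup_usc:
  assumes F: "closedin X F" and "level_sup F < a"
  obtains W where "openin X W" "F \<subseteq> W" "\<And>B. closedin X B \<Longrightarrow> B \<subseteq> W \<Longrightarrow> level_sup B < a"
proof -
  obtain b where b: "level_sup F < b" "b < a"
    using assms(2) dense by blast
  obtain N :: nat where N: "0 < N" "inverse (real N) < b - level_sup F"
    using ex_inverse_of_nat_less[of "b - level_sup F"] b(1) by auto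
  then have N_inv: "1 / real N < b - level_sup F"
    by (simp add: divide_inverse)
  have "\<exists>W. openin X W \<and> F \<subseteq> W \<and>
      (\<forall>B. closedin X B \<and> B \<subseteq> W \<longrightarrow> level_weight B (real k / real N) * ((real k + 1) / real N) < b)"
    if "k \<in> {1..<N}" for k
    using level_weight_grid_usc[OF F N_inv] that by simp
  then obtain W where W: "\<And>k. k \<in> {1..<N} \<Longrightarrow> openin X (W k) \<and> F \<subseteq> W k \<and>
      (\<forall>B. closedin X B \<and> B \<subseteq> W k \<longrightarrow> level_weight B (real k / real N) * ((real k + 1) / real N) < b)"
    by metis
  show ?thesis
  proof
    show "openin X (topspace X \<inter> (\<Inter>k\<in>{1..<N}. W k))"
      using W by (intro openin_Int_Inter) auto
    show "F \<subseteq> topspace X \<inter> (\<Inter>k\<in>{1..<N}. W k)"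
      using W closedin_subset[OF F] by blast
    fix B
    assume B: "closedin X B" "B \<subseteq> topspace X \<inter> (\<Inter>k\<in>{1..<N}. W k)"
    have "level_sup B \<le> b"
    proof (rule level_sup_least)
      fix t :: real
      assume "t \<in> {0<..1}"
      then show "level_weight B t * t \<le> b"
      proof (intro antitone_weighted_le_grid[where h = "level_weight B" and N = N])
        show "level_weight B t' \<le> level_weight B s" if "0 < s" "s \<le> t'" "t' \<le> 1" for s t'
          using that by (intro level_weight_antimono[OF B(1)]) auto
        show "0 \<le> level_weight B t' \<and> level_weight B t' \<le> 1" for t'
          by (simp add: level_weight_nonneg level_weight_le_one)
        show "1 / real N \<le> b"
          using N_inv level_sup_nonneg[of F] by simp
        fix k :: nat
        assume "1 \<le> k" "k < N"
        then have "k \<in> {1..<N}" "B \<subseteq> W k"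
          using B(2) by auto
        then show "level_weight B (real k / real N) * ((real k + 1) / real N) \<le> b"
          using W B(1) by (meson less_le)
      qed (use N in auto)
    qed
    then show "level_sup B < a"
      using b(2) by simp
  qed
qed

lemma capacity_mu_bullet_lift_cap: "capacity X (mu_bullet X (lift_cap X \<A>))"
  unfolding capacity_def mu_bullet_lift_cap_eq
proof (intro conjI allI impI)
  show "(if closedin X (topspace X) then level_sup (topspace X) else 0) = 1"
    using level_sup_upper[of 1 "topspace X"] level_weight_topspace[of 1] level_sup_le_one
    by (simp add: antisym)
  show "(if closedin X {} then level_sup {} else 0) = 0"
    using level_sup_least[of "{}" 0] level_weight_empty level_sup_nonneg[of "{}"] by simp
next
  fix F G
  assume "closedin X F \<and> closedin X G \<and> F \<subseteq> G"
  then show "(if closedin X F then level_sup F else 0) \<le> (if closedin X G then level_sup G else 0)"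
    using level_sup_Un[of F G] by (simp add: Un_absorb1)
next
  fix F a
  assume "closedin X F \<and> (if closedin X F then level_sup F else 0) < a"
  then have "closedin X F" "level_sup F < a"
    by auto
  then show "\<exists>W. openin X W \<and> F \<subseteq> W \<and>
      (\<forall>B. closedin X B \<and> B \<subseteq> W \<longrightarrow> (if closedin X B then level_sup B else 0) < a)"
  proof (rule level_sup_usc)
    fix W
    assume "openin X W" "F \<subseteq> W" "\<And>B. closedin X B \<Longrightarrow> B \<subseteq> W \<Longrightarrow> level_sup B < a"
    then show ?thesis
      by auto
  qed
qed (auto simp: level_sup_nonneg level_sup_le_one)

theorem mu_bullet_lift_cap_in_poss_caps: "mu_bullet X (lift_cap X \<A>) \<in> poss_caps X"
  using capacity_mu_bullet_lift_cap
  by (simp add: poss_caps_def poss_capacity_def mu_bullet_lift_cap_eq level_sup_Un closedin_Un)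

end

theorem lemma1:
  fixes X :: "'a topology" and \<A> :: "('a set \<Rightarrow> real) set \<Rightarrow> real"
  assumes "compact_space X" and "Hausdorff_space X"
    and "\<A> \<in> poss_caps (poss_caps_top X)"
  shows "mu_bullet X (lift_cap X \<A>) \<in> poss_caps X"
proof -
  interpret maxitive_capacity_on_poss_caps X \<A>
    using assms compact_Hausdorff_or_regular_imp_normal_space
    by unfold_locales blast+
  show ?thesis
    by (rule mu_bullet_lift_cap_in_poss_caps)
qed

end
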